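(* Let $(V_1,V_2)$ be a pair of commuting isometries on a Hilbert space $\mathcal H$ with $C(V_1,V_2)\ge0$ and $C(V_1,V_2)\neq0$. Then $\sigma(V_1,V_2)=\overline{\mathbb D^2}$ and every point $(w_1,w_2)\in\mathbb D^2$ is a joint eigenvalue of $(V_1^*,V_2^* )$. In particular, for every $(w_1,w_2)\in\mathbb D^2$, the non-singularity of the Koszul complex of $(V_1-w_1I,V_2-w_2I)$ is broken at the third stage.
   Context: Defect operator: $C(V_1,V_2)=I-V_1V_1^*-V_2V_2^*+V_1V_2V_2^*V_1^*$. For commuting bounded operators $T_1,T_2$ on $\mathcal H$, the Koszul complex is $0\xrightarrow{\delta_0}\mathcal H\xrightarrow{\delta_1}\mathcal H\oplus\mathcal H\xrightarrow{\delta_2}\mathcal H\xrightarrow{\delta_3}0$ with $\delta_1h=(T_1h,T_2h)$, $\delta_2(h_1,h_2)=T_1h_2-T_2h_1$; $\sigma(T_1,T_2)$ (Taylor joint spectrum) is the set of $(\lambda_1,\lambda_2)$ for which the complex of $(T_1-\lambda_1I,T_2-\lambda_2I)$ is not exact. The non-singularity breaks at stage $n$ if $\operatorname{ran}\delta_{n-1}\ne\ker\delta_n$; breaking at stage 3 means $\operatorname{ran}T_1+\operatorname{ran}T_2\neq\mathcal H$. *)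

theory Defs
  imports "HOL-Analysis.Analysis"
begin

class complex_inner = ab_group_add +
  fixes scaleC :: "complex \<Rightarrow> 'a \<Rightarrow> 'a" (infixr "*\<^sub>C" 75)
    and cinner :: "'a \<Rightarrow> 'a \<Rightarrow> complex"
  assumes scaleC_add_right: "a *\<^sub>C (x + y) = a *\<^sub>C x + a *\<^sub>C y"
    and scaleC_add_left: "(a + b) *\<^sub>C x = a *\<^sub>C x + b *\<^sub>C x"
    and scaleC_scaleC: "a *\<^sub>C (b *\<^sub>C x) = (a * b) *\<^sub>C x"
    and scaleC_one: "1 *\<^sub>C x = x"
    and cinner_add_left: "cinner (x + y) z = cinner x z + cinner y z"
    and cinner_scaleC_left: "cinner (a *\<^sub>C x) y = a * cinner x y"
    and cinner_commute: "cinner y x = cnj (cinner x y)"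
    and cinner_ge_zero: "Re (cinner x x) \<ge> 0"
    and cinner_eq_zero_iff: "cinner x x = 0 \<longleftrightarrow> x = 0"
begin

definition cnorm :: "'a \<Rightarrow> real" where
  "cnorm x = sqrt (Re (cinner x x))"

end

class complex_hilbert = complex_inner +
  assumes cauchy_convergent:
    "(\<forall>e>0. \<exists>N. \<forall>m\<ge>N. \<forall>n\<ge>N. cnorm (X m - X n) < e)
       \<Longrightarrow> \<exists>L. (\<lambda>n. cnorm (X n - L)) \<longlonglongrightarrow> 0"

definition bounded_clinear :: "('a::complex_inner \<Rightarrow> 'a) \<Rightarrow> bool" where
  "bounded_clinear T \<longleftrightarrow>
     (\<forall>x y. T (x + y) = T x + T y) \<and> (\<forall>c x. T (c *\<^sub>C x) = c *\<^sub>C T x) \<and>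
     (\<exists>K. \<forall>x. cnorm (T x) \<le> K * cnorm x)"

definition is_adjoint :: "('a::complex_inner \<Rightarrow> 'a) \<Rightarrow> ('a \<Rightarrow> 'a) \<Rightarrow> bool" where
  "is_adjoint T S \<longleftrightarrow> (\<forall>x y. cinner (T x) y = cinner x (S y))"

definition isometry :: "('a::complex_inner \<Rightarrow> 'a) \<Rightarrow> bool" where
  "isometry V \<longleftrightarrow> bounded_clinear V \<and> (\<forall>x. cnorm (V x) = cnorm x)"

definition defect ::
  "('a::complex_inner \<Rightarrow> 'a) \<Rightarrow> ('a \<Rightarrow> 'a) \<Rightarrow> ('a \<Rightarrow> 'a) \<Rightarrow> ('a \<Rightarrow> 'a) \<Rightarrow> 'a \<Rightarrow> 'a" where
  "defect V1 V1s V2 V2s = (\<lambda>x. x - V1 (V1s x) - V2 (V2s x) + V1 (V2 (V2s (V1s x))))"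

definition positive_op :: "('a::complex_inner \<Rightarrow> 'a) \<Rightarrow> bool" where
  "positive_op A \<longleftrightarrow> (\<forall>x. Im (cinner (A x) x) = 0 \<and> Re (cinner (A x) x) \<ge> 0)"

text \<open>Koszul complex 0 -> H -> H + H -> H -> 0 with d1 h = (T1 h, T2 h),
  d2 (h1, h2) = T1 h2 - T2 h1.  Non-singularity breaks at stage n iff
  ran d_(n-1) differs from ker d_n.\<close>

definition koszul_breaks_at ::
  "nat \<Rightarrow> ('a::complex_inner \<Rightarrow> 'a) \<Rightarrow> ('a \<Rightarrow> 'a) \<Rightarrow> bool" where
  "koszul_breaks_at n T1 T2 \<longleftrightarrow>
     (n = 1 \<and> {h. T1 h = 0 \<and> T2 h = 0} \<noteq> {0}) \<or>
     (n = 2 \<and> {(h1, h2). T1 h2 - T2 h1 = 0} \<noteq> {(T1 h, T2 h) | h. True}) \<or>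
     (n = 3 \<and> {T1 h2 - T2 h1 | h1 h2. True} \<noteq> UNIV)"

definition koszul_exact :: "('a::complex_inner \<Rightarrow> 'a) \<Rightarrow> ('a \<Rightarrow> 'a) \<Rightarrow> bool" where
  "koszul_exact T1 T2 \<longleftrightarrow> (\<forall>n\<in>{1,2,3}. \<not> koszul_breaks_at n T1 T2)"

definition shift_op :: "('a::complex_inner \<Rightarrow> 'a) \<Rightarrow> complex \<Rightarrow> 'a \<Rightarrow> 'a" where
  "shift_op T c = (\<lambda>x. T x - c *\<^sub>C x)"

definition taylor_spectrum ::
  "('a::complex_inner \<Rightarrow> 'a) \<Rightarrow> ('a \<Rightarrow> 'a) \<Rightarrow> (complex \<times> complex) set" where
  "taylor_spectrum T1 T2 =
     {(l1, l2). \<not> koszul_exact (shift_op T1 l1) (shift_op T2 l2)}"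

definition joint_eigenvalue ::
  "('a::complex_inner \<Rightarrow> 'a) \<Rightarrow> ('a \<Rightarrow> 'a) \<Rightarrow> complex \<times> complex \<Rightarrow> bool" where
  "joint_eigenvalue T1 T2 w \<longleftrightarrow>
     (\<exists>x. x \<noteq> 0 \<and> T1 x = fst w *\<^sub>C x \<and> T2 x = snd w *\<^sub>C x)"

end

theory Submission
  imports Defs
begin

text \<open>
  Positivity of the defect \<open>C = C(V\<^sub>1, V\<^sub>2)\<close> makes \<open>ker V\<^sub>2\<^sup>*\<close> invariant under \<open>V\<^sub>1\<close> and
  \<open>ker V\<^sub>1\<^sup>*\<close> invariant under \<open>V\<^sub>2\<close>; as the range of \<open>C\<close> lies in \<open>ker V\<^sub>1\<^sup>* \<inter> ker V\<^sub>2\<^sup>*\<close>,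
  there is a vector \<open>e \<noteq> 0\<close> killed by both adjoints (a wandering vector).
  For \<open>|c\<^sub>1|, |c\<^sub>2| < 1\<close> the vector \<open>x = \<Sum> c\<^sub>1\<^sup>m c\<^sub>2\<^sup>n V\<^sub>1\<^sup>m V\<^sub>2\<^sup>n e\<close> satisfies
  \<open>V\<^sub>i\<^sup>* x = c\<^sub>i x\<close> and \<open>\<langle>e, x\<rangle> = \<parallel>e\<parallel>\<^sup>2\<close>. With \<open>c\<^sub>i = conj \<lambda>\<^sub>i\<close> it is orthogonal to
  \<open>ran (V\<^sub>1 - \<lambda>\<^sub>1) + ran (V\<^sub>2 - \<lambda>\<^sub>2)\<close>, so the Koszul complex breaks at stage 3 on the open
  bidisc. If \<open>|\<lambda>\<^sub>1| = 1\<close>, the vector \<open>y = \<Sum> conj \<lambda>\<^sub>1\<^sup>n / (n + 1) V\<^sub>1\<^sup>n e\<close> is not in that range: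
  its pairing with the eigenvector for \<open>c\<^sub>i = r conj \<lambda>\<^sub>i\<close> is \<open>\<parallel>e\<parallel>\<^sup>2 \<Sum> r\<^sup>n / (n + 1)\<close>, which is
  unbounded as \<open>r \<rightarrow> 1\<close>, whereas pairings with elements of the range stay bounded because
  \<open>(1 - r) \<parallel>x\<parallel> \<le> \<parallel>e\<parallel>\<close>. Outside the closed bidisc one of the \<open>V\<^sub>i - \<lambda>\<^sub>i\<close> is invertible
  by a Neumann series, and the complex is exact.
\<close>

section \<open>Complex inner product spaces\<close>

interpretation scaleC: module "scaleC :: complex \<Rightarrow> 'a \<Rightarrow> 'a::complex_inner"
  by standard (fact scaleC_add_right scaleC_add_left scaleC_scaleC scaleC_one)+

lemma additive_cinner_left: "Modules.additive (\<lambda>x. cinner x z)"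
  by standard (fact cinner_add_left)

lemmas cinner_zero_left [simp] = Modules.additive.zero[OF additive_cinner_left]
  and cinner_minus_left = Modules.additive.minus[OF additive_cinner_left]
  and cinner_diff_left = Modules.additive.diff[OF additive_cinner_left]
  and cinner_sum_left = Modules.additive.sum[OF additive_cinner_left]

lemma cinner_add_right: "cinner x (y + z) = cinner x y + cinner x z"
  by (metis cinner_add_left cinner_commute complex_cnj_add)

lemma cinner_scaleC_right: "cinner x (a *\<^sub>C y) = cnj a * cinner x y"
  by (metis cinner_commute cinner_scaleC_left complex_cnj_mult)

lemma additive_cinner_right: "Modules.additive (\<lambda>y. cinner x y)"
  by standard (fact cinner_add_right)

lemmas cinner_zero_right [simp] = Modules.additive.zero[OF additive_cinner_right]
  and cinner_diff_right = Modules.additive.diff[OF additive_cinner_right]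
  and cinner_sum_right = Modules.additive.sum[OF additive_cinner_right]

lemma power2_cnorm: "(cnorm x)\<^sup>2 = Re (cinner x x)"
  by (simp add: cnorm_def cinner_ge_zero)

lemma cinner_self_eq_cnorm: "cinner x x = complex_of_real ((cnorm x)\<^sup>2)"
proof -
  have "Im (cinner x x) = 0"
    using cinner_commute[of x x] by (simp add: complex_eq_iff)
  then show ?thesis
    by (simp add: power2_cnorm complex_eq_iff)
qed

lemma cnorm_nonneg [simp]: "0 \<le> cnorm x"
  by (simp add: cnorm_def cinner_ge_zero)

lemma cnorm_eq_0_iff [simp]: "cnorm x = 0 \<longleftrightarrow> x = 0"
  using cinner_self_eq_cnorm[of x] cinner_eq_zero_iff[of x] by auto

lemma cnorm_zero [simp]: "cnorm 0 = 0"
  by simp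

lemma cnorm_scaleC: "cnorm (a *\<^sub>C x) = cmod a * cnorm x"
proof -
  have "cinner (a *\<^sub>C x) (a *\<^sub>C x) = a * cnj a * cinner x x"
    by (simp add: cinner_scaleC_left cinner_scaleC_right mult.assoc)
  also have "\<dots> = complex_of_real ((cmod a)\<^sup>2) * cinner x x"
    by (simp only: complex_norm_square)
  finally have "(cnorm (a *\<^sub>C x))\<^sup>2 = (cmod a * cnorm x)\<^sup>2"
    by (simp add: power2_cnorm power_mult_distrib)
  then show ?thesis
    by (simp add: power2_eq_iff_nonneg)
qed

lemma cnorm_minus [simp]: "cnorm (- x) = cnorm x"
  using cnorm_scaleC[of "- 1" x] by simp

lemma cnorm_minus_commute: "cnorm (x - y) = cnorm (y - x)"
  by (metis cnorm_minus minus_diff_eq)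

lemma power2_cnorm_add: "(cnorm (x + y))\<^sup>2 = (cnorm x)\<^sup>2 + (cnorm y)\<^sup>2 + 2 * Re (cinner x y)"
proof -
  have "cinner (x + y) (x + y) = cinner x x + cinner y y + (cinner x y + cnj (cinner x y))"
    by (simp add: cinner_add_left cinner_add_right cinner_commute[of x y])
  then show ?thesis
    by (simp add: power2_cnorm)
qed

lemma power2_cnorm_add_orthogonal: "cinner x y = 0 \<Longrightarrow> (cnorm (x + y))\<^sup>2 = (cnorm x)\<^sup>2 + (cnorm y)\<^sup>2"
  by (simp add: power2_cnorm_add)

lemma cinner_right_eqI: "(\<And>z. cinner z a = cinner z b) \<Longrightarrow> a = b"
  by (metis cinner_diff_right cinner_eq_zero_iff eq_iff_diff_eq_0)

lemma cnorm_cauchy_schwarz: "cmod (cinner x y) \<le> cnorm x * cnorm y"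
proof (cases "y = 0")
  case False
  define n where "n = (cnorm y)\<^sup>2"
  define c where "c = cinner x y"
  define w where "w = n *\<^sub>C x - c *\<^sub>C y"
  have "n > 0"
    using False by (simp add: n_def)
  have "cinner w w = n * n * cinner x x - n * cnj c * c - c * n * cnj c + c * cnj c * n"
    by (simp add: w_def cinner_diff_left cinner_diff_right cinner_scaleC_left
        cinner_scaleC_right cinner_commute[of y x] cinner_self_eq_cnorm[of y]
        flip: c_def n_def) (simp add: algebra_simps)
  also have "\<dots> = complex_of_real (n * (n * (cnorm x)\<^sup>2 - (cmod c)\<^sup>2))"
    using complex_norm_square[of c] by (simp add: cinner_self_eq_cnorm algebra_simps)
  finally have "0 \<le> n * (n * (cnorm x)\<^sup>2 - (cmod c)\<^sup>2)"
    by (metis Re_complex_of_real cinner_ge_zero)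
  then have "(cmod c)\<^sup>2 \<le> (cnorm x * cnorm y)\<^sup>2"
    using \<open>n > 0\<close> by (simp add: n_def power_mult_distrib zero_le_mult_iff mult.commute)
  then show ?thesis
    unfolding c_def by (rule power2_le_imp_le) simp
qed simp

lemma cnorm_triangle_ineq: "cnorm (x + y) \<le> cnorm x + cnorm y"
proof -
  have "Re (cinner x y) \<le> cnorm x * cnorm y"
    by (rule order_trans[OF complex_Re_le_cmod cnorm_cauchy_schwarz])
  then have "(cnorm (x + y))\<^sup>2 \<le> (cnorm x + cnorm y)\<^sup>2"
    by (simp add: power2_cnorm_add power2_sum)
  then show ?thesis
    by (rule power2_le_imp_le) simp
qed

lemma cnorm_sum: "cnorm (sum f A) \<le> (\<Sum>a\<in>A. cnorm (f a))"
  by (induction A rule: infinite_finite_induct) (auto intro: order_trans[OF cnorm_triangle_ineq])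

lemma power2_cnorm_sum_orthogonal:
  assumes "\<And>m n. m \<noteq> n \<Longrightarrow> cinner (z m) (z n) = 0" and "finite A"
  shows "(cnorm (sum z A))\<^sup>2 = (\<Sum>k\<in>A. (cnorm (z k))\<^sup>2)"
  using \<open>finite A\<close>
proof (induction A rule: finite_induct)
  case (insert a A)
  then have "cinner (z a) (sum z A) = 0"
    using insert.hyps(2) by (auto simp: cinner_sum_right intro!: sum.neutral assms(1))
  then show ?case
    using insert by (simp add: power2_cnorm_add_orthogonal)
qed simp

section \<open>Bounded operators, adjoints and isometries\<close>

lemma bounded_clinearI:
  assumes "\<And>x y. T (x + y) = T x + T y" and "\<And>c x. T (c *\<^sub>C x) = c *\<^sub>C T x"
    and "\<And>x. cnorm (T x) \<le> K * cnorm x"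
  shows "bounded_clinear T"
  using assms unfolding bounded_clinear_def by blast

lemma bounded_clinear_add: "bounded_clinear T \<Longrightarrow> T (x + y) = T x + T y"
  and bounded_clinear_scaleC: "bounded_clinear T \<Longrightarrow> T (c *\<^sub>C x) = c *\<^sub>C T x"
  by (simp_all add: bounded_clinear_def)

lemma bounded_clinear_bound:
  assumes "bounded_clinear T"
  obtains K where "\<And>x. cnorm (T x) \<le> K * cnorm x" and "0 \<le> K"
proof -
  obtain K where "\<And>x. cnorm (T x) \<le> K * cnorm x"
    using assms unfolding bounded_clinear_def by blast
  then have "\<And>x. cnorm (T x) \<le> max K 0 * cnorm x"
    by (meson max.cobounded1 mult_right_mono cnorm_nonneg order_trans)
  then show ?thesis
    using that by fastforce
qed

lemma additive_bounded_clinear: "bounded_clinear T \<Longrightarrow> Modules.additive T"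
  by unfold_locales (rule bounded_clinear_add)

lemmas bounded_clinear_zero = Modules.additive.zero[OF additive_bounded_clinear]
  and bounded_clinear_diff = Modules.additive.diff[OF additive_bounded_clinear]
  and bounded_clinear_sum = Modules.additive.sum[OF additive_bounded_clinear]

lemma bounded_clinear_id: "bounded_clinear id"
  by (rule bounded_clinearI[where K = 1]) simp_all

lemma bounded_clinear_compose:
  assumes "bounded_clinear S" and "bounded_clinear T"
  shows "bounded_clinear (S \<circ> T)"
proof -
  obtain K L where K: "\<And>x. cnorm (S x) \<le> K * cnorm x" "0 \<le> K"
    and L: "\<And>x. cnorm (T x) \<le> L * cnorm x"
    using assms by (meson bounded_clinear_bound)
  have "cnorm (S (T x)) \<le> K * (L * cnorm x)" for x
    using K L order_trans mult_left_mono by metis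
  then show ?thesis
    using assms by (intro bounded_clinearI[where K = "K * L"])
      (simp_all add: bounded_clinear_add bounded_clinear_scaleC mult.assoc)
qed

lemma bounded_clinear_funpow: "bounded_clinear V \<Longrightarrow> bounded_clinear (V ^^ n)"
  by (induction n) (simp_all add: bounded_clinear_id bounded_clinear_compose)

lemma bounded_clinear_shift_op:
  assumes "bounded_clinear V"
  shows "bounded_clinear (shift_op V l)"
proof -
  obtain K where K: "\<And>x. cnorm (V x) \<le> K * cnorm x"
    using assms by (meson bounded_clinear_bound)
  have "cnorm (V x - l *\<^sub>C x) \<le> (K + cmod l) * cnorm x" for x
    using cnorm_triangle_ineq[of "V x" "- (l *\<^sub>C x)"] K[of x]
    by (simp add: cnorm_scaleC distrib_right)
  then show ?thesis
    using assms unfolding shift_op_def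
    by (intro bounded_clinearI[where K = "K + cmod l"])
      (simp_all add: bounded_clinear_add bounded_clinear_scaleC algebra_simps)
qed

lemma is_adjointD: "is_adjoint T S \<Longrightarrow> cinner (T x) y = cinner x (S y)"
  by (simp add: is_adjoint_def)

lemma additive_adjoint: "is_adjoint T S \<Longrightarrow> Modules.additive S"
  by unfold_locales
    (rule cinner_right_eqI, simp add: is_adjointD[of T S, symmetric] cinner_add_right)

lemmas adjoint_add = Modules.additive.add[OF additive_adjoint]
  and adjoint_diff = Modules.additive.diff[OF additive_adjoint]

lemma adjoint_scaleC: "is_adjoint T S \<Longrightarrow> S (c *\<^sub>C x) = c *\<^sub>C S x"
  by (rule cinner_right_eqI) (simp add: is_adjointD[of T S, symmetric] cinner_scaleC_right)

lemma is_adjoint_funpow: "is_adjoint T S \<Longrightarrow> is_adjoint (T ^^ n) (S ^^ n)"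
  by (induction n) (simp_all add: is_adjoint_def funpow_swap1)

lemma cinner_adjoint_kernel:
  assumes "is_adjoint V Vs" and "Vs w = 0"
  shows "cinner w (V x) = 0"
  using is_adjointD[OF assms(1), of x w] cinner_commute[of w "V x"] by (simp add: assms(2))

lemma isometry_bounded_clinear: "isometry V \<Longrightarrow> bounded_clinear V"
  and isometry_cnorm: "isometry V \<Longrightarrow> cnorm (V x) = cnorm x"
  by (simp_all add: isometry_def)

lemma isometry_funpow: "isometry V \<Longrightarrow> isometry (V ^^ n)"
  by (induction n) (simp_all add: isometry_def bounded_clinear_id bounded_clinear_compose)

context
  fixes V Vs :: "'a::complex_inner \<Rightarrow> 'a"
  assumes iso: "isometry V" and adj: "is_adjoint V Vs"
begin

lemma cnorm_isometry_adjoint_le: "cnorm (Vs y) \<le> cnorm y"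
proof -
  have "(cnorm (Vs y))\<^sup>2 = Re (cinner (V (Vs y)) y)"
    by (simp add: power2_cnorm is_adjointD[OF adj])
  also have "\<dots> \<le> cnorm (V (Vs y)) * cnorm y"
    by (rule order_trans[OF complex_Re_le_cmod cnorm_cauchy_schwarz])
  finally have "cnorm (Vs y) * cnorm (Vs y) \<le> cnorm (Vs y) * cnorm y"
    by (simp add: power2_eq_square isometry_cnorm[OF iso])
  then show ?thesis
    using cnorm_nonneg[of "Vs y"] cnorm_nonneg[of y]
    by (cases "cnorm (Vs y) = 0") (auto simp: mult_le_cancel_left)
qed

lemma bounded_clinear_isometry_adjoint: "bounded_clinear Vs"
  by (rule bounded_clinearI[where K = 1])
    (simp_all add: adjoint_add[OF adj] adjoint_scaleC[OF adj] cnorm_isometry_adjoint_le)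

lemma isometry_adjoint_cancel: "Vs (V x) = x"
proof -
  define d where "d = Vs (V x) - x"
  have "cinner x (Vs (V x)) = cinner x x"
    by (simp add: is_adjointD[OF adj, symmetric] cinner_self_eq_cnorm isometry_cnorm[OF iso])
  then have "cinner x d = 0"
    by (simp add: d_def cinner_diff_right)
  then have "(cnorm (x + d))\<^sup>2 = (cnorm x)\<^sup>2 + (cnorm d)\<^sup>2"
    by (rule power2_cnorm_add_orthogonal)
  moreover have "(cnorm (x + d))\<^sup>2 \<le> (cnorm x)\<^sup>2"
    using cnorm_isometry_adjoint_le[of "V x"]
    by (simp add: d_def isometry_cnorm[OF iso] power_mono)
  ultimately have "cnorm d = 0"
    by simp
  then show ?thesis
    by (simp add: d_def)
qed

lemma isometry_cinner: "cinner (V x) (V y) = cinner x y"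
  by (simp add: is_adjointD[OF adj] isometry_adjoint_cancel)

lemma isometry_funpow_cinner: "cinner ((V ^^ n) x) ((V ^^ n) y) = cinner x y"
  by (induction n) (simp_all add: isometry_cinner)

lemma cinner_funpow_wandering:
  assumes "Vs e = 0" and "m \<noteq> n"
  shows "cinner ((V ^^ m) e) ((V ^^ n) e) = 0"
proof -
  have "cinner ((V ^^ m) e) ((V ^^ n) e) = 0" if "n < m" for m n
  proof -
    define k where "k = m - Suc n"
    have m: "m = n + Suc k"
      using \<open>n < m\<close> by (simp add: k_def)
    have "cinner ((V ^^ m) e) ((V ^^ n) e) = cinner ((V ^^ Suc k) e) e"
      unfolding m funpow_add comp_apply
      by (simp only: isometry_funpow_cinner)
    also have "\<dots> = cinner ((V ^^ k) e) (Vs e)"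
      by (simp add: is_adjointD[OF adj])
    finally show ?thesis
      by (simp add: \<open>Vs e = 0\<close>)
  qed
  then show ?thesis
    using \<open>m \<noteq> n\<close> cinner_commute[of "(V ^^ m) e" "(V ^^ n) e"]
    by (metis complex_cnj_zero linorder_neqE_nat)
qed

end

lemma cinner_funpow_adjoint_eigenvector:
  assumes "is_adjoint V Vs" and "Vs x = c *\<^sub>C x"
  shows "cinner ((V ^^ n) e) x = cnj c ^ n * cinner e x"
proof -
  have "(Vs ^^ n) x = c ^ n *\<^sub>C x"
    by (induction n) (simp_all add: assms adjoint_scaleC[OF assms(1)] mult.commute)
  then show ?thesis
    by (simp add: is_adjointD[OF is_adjoint_funpow[OF assms(1)]] cinner_scaleC_right)
qed

section \<open>Norm convergence and series\<close>

text \<open>The class \<^class>\<open>complex_inner\<close> carries no topology, so limits are taken with respect to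
  \<^const>\<open>cnorm\<close> by hand.\<close>

definition ctendsto :: "(nat \<Rightarrow> 'a::complex_inner) \<Rightarrow> 'a \<Rightarrow> bool" where
  "ctendsto X L \<longleftrightarrow> (\<lambda>n. cnorm (X n - L)) \<longlonglongrightarrow> 0"

lemma ctendsto_comparison:
  assumes "\<And>n. cnorm (X n - L) \<le> g n" and "g \<longlonglongrightarrow> 0"
  shows "ctendsto X L"
  unfolding ctendsto_def by (rule Lim_null_comparison[where g = g]) (use assms in auto)

lemma ctendsto_unique:
  assumes "ctendsto X a" and "ctendsto X b"
  shows "a = b"
proof -
  have "cnorm (a - b) \<le> cnorm (X n - b) + cnorm (X n - a)" for n
    using cnorm_triangle_ineq[of "X n - b" "a - X n"] cnorm_minus_commute[of a "X n"] by simp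
  moreover have "(\<lambda>n. cnorm (X n - b) + cnorm (X n - a)) \<longlonglongrightarrow> 0"
    using assms tendsto_add[of _ 0 _ _ 0] unfolding ctendsto_def by auto
  ultimately have "cnorm (a - b) \<le> 0"
    by (intro LIMSEQ_le_const) auto
  then have "cnorm (a - b) = 0"
    using cnorm_nonneg[of "a - b"] by linarith
  then show ?thesis
    by simp
qed

lemma ctendsto_const: "ctendsto (\<lambda>n. L) L"
  by (simp add: ctendsto_def)

lemma ctendsto_Suc: "ctendsto X L \<Longrightarrow> ctendsto (\<lambda>n. X (Suc n)) L"
  unfolding ctendsto_def by (rule LIMSEQ_Suc)

lemma ctendsto_add_left: "ctendsto X L \<Longrightarrow> ctendsto (\<lambda>n. u + X n) (u + L)"
  by (simp add: ctendsto_def)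

lemma ctendsto_bounded_clinear:
  assumes "bounded_clinear T" and "ctendsto X L"
  shows "ctendsto (\<lambda>n. T (X n)) (T L)"
proof -
  obtain K where K: "\<And>x. cnorm (T x) \<le> K * cnorm x"
    using assms(1) by (meson bounded_clinear_bound)
  show ?thesis
  proof (rule ctendsto_comparison)
    show "cnorm (T (X n) - T L) \<le> K * cnorm (X n - L)" for n
      using K by (simp add: bounded_clinear_diff[OF assms(1), symmetric])
    show "(\<lambda>n. K * cnorm (X n - L)) \<longlonglongrightarrow> 0"
      using assms(2) unfolding ctendsto_def by (rule tendsto_mult_right_zero)
  qed
qed

lemma tendsto_cinner_left:
  assumes "ctendsto X L"
  shows "(\<lambda>n. cinner (X n) z) \<longlonglongrightarrow> cinner L z"
proof -
  have "(\<lambda>n. cnorm (X n - L) * cnorm z) \<longlonglongrightarrow> 0"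
    using assms unfolding ctendsto_def by (intro tendsto_mult_left_zero)
  then have "(\<lambda>n. cinner (X n) z - cinner L z) \<longlonglongrightarrow> 0"
    by (rule Lim_null_comparison[rotated]) (simp add: cinner_diff_left[symmetric] cnorm_cauchy_schwarz)
  then show ?thesis
    by (rule LIM_zero_cancel)
qed

lemma ctendsto_partial_sums_Cauchy:
  fixes z :: "nat \<Rightarrow> 'a::complex_hilbert"
  assumes "\<And>e. 0 < e \<Longrightarrow> \<exists>N. \<forall>m\<ge>N. \<forall>n\<ge>m. cnorm (\<Sum>k\<in>{m..<n}. z k) < e"
  shows "\<exists>L. ctendsto (\<lambda>N. \<Sum>n<N. z n) L"
proof -
  have Cauchy: "\<exists>N. \<forall>m\<ge>N. \<forall>n\<ge>N. cnorm ((\<Sum>k<m. z k) - (\<Sum>k<n. z k)) < e"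
    if "0 < e" for e
  proof -
    obtain N where N: "\<And>m n. N \<le> m \<Longrightarrow> m \<le> n \<Longrightarrow> cnorm (\<Sum>k\<in>{m..<n}. z k) < e"
      using assms[OF \<open>0 < e\<close>] by blast
    have N': "cnorm ((\<Sum>k<n. z k) - (\<Sum>k<m. z k)) < e" if "N \<le> m" "m \<le> n" for m n
      using N[OF that] that by (simp add: lessThan_atLeast0 sum_diff_nat_ivl)
    have "cnorm ((\<Sum>k<m. z k) - (\<Sum>k<n. z k)) < e" if "N \<le> m" "N \<le> n" for m n
    proof (cases "m \<le> n")
      case True
      then show ?thesis
        using N'[of m n] that cnorm_minus_commute[of "\<Sum>k<m. z k"] by simp
    next
      case False
      then show ?thesis
        using N'[of n m] that by simp
    qed
    then show ?thesis
      by blast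
  qed
  show ?thesis
    unfolding ctendsto_def by (rule cauchy_convergent) (simp add: Cauchy)
qed

lemma ctendsto_summable_cnorm:
  fixes z :: "nat \<Rightarrow> 'a::complex_hilbert"
  assumes "summable (\<lambda>n. cnorm (z n))"
  shows "\<exists>L. ctendsto (\<lambda>N. \<Sum>n<N. z n) L"
proof (rule ctendsto_partial_sums_Cauchy)
  fix e :: real
  assume "0 < e"
  then obtain N where N: "\<forall>m\<ge>N. \<forall>n. \<bar>\<Sum>k\<in>{m..<n}. cnorm (z k)\<bar> < e"
    using assms unfolding summable_Cauchy by auto
  have "cnorm (\<Sum>k\<in>{m..<n}. z k) < e" if "N \<le> m" for m n
  proof -
    have "(\<Sum>k\<in>{m..<n}. cnorm (z k)) < e"
      using N that by (simp add: abs_less_iff)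
    then show ?thesis
      using cnorm_sum[of z "{m..<n}"] by linarith
  qed
  then show "\<exists>N. \<forall>m\<ge>N. \<forall>n\<ge>m. cnorm (\<Sum>k\<in>{m..<n}. z k) < e"
    by blast
qed

lemma ctendsto_summable_orthogonal:
  fixes z :: "nat \<Rightarrow> 'a::complex_hilbert"
  assumes "summable (\<lambda>n. (cnorm (z n))\<^sup>2)" and "\<And>m n. m \<noteq> n \<Longrightarrow> cinner (z m) (z n) = 0"
  shows "\<exists>L. ctendsto (\<lambda>N. \<Sum>n<N. z n) L"
proof (rule ctendsto_partial_sums_Cauchy)
  fix e :: real
  assume "0 < e"
  then have "0 < e\<^sup>2"
    by simp
  then obtain N where N: "\<forall>m\<ge>N. \<forall>n. \<bar>\<Sum>k\<in>{m..<n}. (cnorm (z k))\<^sup>2\<bar> < e\<^sup>2"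
    using assms(1) unfolding summable_Cauchy real_norm_def by blast
  have "cnorm (\<Sum>k\<in>{m..<n}. z k) < e" if "N \<le> m" for m n
  proof (rule power_less_imp_less_base)
    show "(cnorm (\<Sum>k\<in>{m..<n}. z k))\<^sup>2 < e\<^sup>2"
      using N that by (simp add: power2_cnorm_sum_orthogonal[OF assms(2)] abs_less_iff)
  qed (use \<open>0 < e\<close> in simp)
  then show "\<exists>N. \<forall>m\<ge>N. \<forall>n\<ge>m. cnorm (\<Sum>k\<in>{m..<n}. z k) < e"
    by blast
qed

lemma ctendsto_scaleC:
  assumes "ctendsto X L"
  shows "ctendsto (\<lambda>n. c *\<^sub>C X n) (c *\<^sub>C L)"
proof (rule ctendsto_comparison)
  show "cnorm (c *\<^sub>C X n - c *\<^sub>C L) \<le> cmod c * cnorm (X n - L)" for n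
    by (simp add: cnorm_scaleC flip: scaleC.scale_right_diff_distrib)
  show "(\<lambda>n. cmod c * cnorm (X n - L)) \<longlonglongrightarrow> 0"
    using assms unfolding ctendsto_def by (rule tendsto_mult_right_zero)
qed

lemma bounded_clinear_series_eq_0:
  assumes T: "bounded_clinear T" and f: "ctendsto (\<lambda>N. \<Sum>n<N. z n) f"
    and "\<And>n. T (z n) = 0"
  shows "T f = 0"
proof -
  have "ctendsto (\<lambda>N. T (\<Sum>n<N. z n)) 0"
    by (simp add: bounded_clinear_sum[OF T] assms(3) ctendsto_const)
  then show ?thesis
    by (rule ctendsto_unique[OF ctendsto_bounded_clinear[OF T f]])
qed

lemma power_harmonic_sum_unbounded:
  fixes K :: real
  obtains r M where "0 < r" and "r < 1" and "K < (\<Sum>n<M. r ^ n / real (Suc n))"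
proof -
  have "\<not> summable (\<lambda>n. inverse (real (Suc n)))"
    using not_summable_harmonic[where 'a = real] summable_Suc_iff[of "\<lambda>n. inverse (real n)"]
    by simp
  then obtain M where "K < (\<Sum>n<M. inverse (real (Suc n)))"
    using summableI_nonneg_bounded[of "\<lambda>n. inverse (real (Suc n))" K]
    by (meson not_le of_nat_0_le_iff inverse_nonnegative_iff_nonnegative)
  then have "K < (\<Sum>n<M. 1 ^ n / real (Suc n))"
    by (simp add: divide_inverse)
  moreover have "((\<lambda>r. \<Sum>n<M. r ^ n / real (Suc n)) \<longlongrightarrow> (\<Sum>n<M. 1 ^ n / real (Suc n))) (at_left 1)"
    by (intro tendsto_intros) simp
  ultimately have "\<forall>\<^sub>F r in at_left 1. K < (\<Sum>n<M. r ^ n / real (Suc n))"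
    by (simp add: order_tendstoD(1))
  moreover have "\<forall>\<^sub>F r in at_left 1. 0 < r \<and> r < (1::real)"
    using eventually_at_left_real[of 0 "1::real"] by (simp add: eventually_mono)
  ultimately have "\<exists>r. K < (\<Sum>n<M. r ^ n / real (Suc n)) \<and> (0 < r \<and> r < 1)"
    by (rule eventually_happens'[OF trivial_limit_at_left_real eventually_conj])
  then show ?thesis
    using that by blast
qed

lemma one_minus_mult_le_of_power2_eq:
  fixes X E a b r :: real
  assumes eq: "X\<^sup>2 * ((1 - a\<^sup>2) * (1 - b\<^sup>2)) = E\<^sup>2"
    and "\<bar>a\<bar> \<le> r" and "\<bar>b\<bar> \<le> r" and "r < 1" and "0 \<le> E"
  shows "(1 - r) * X \<le> E"
proof -
  have "0 \<le> r"
    using assms(2) by linarith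
  then have "r\<^sup>2 \<le> r"
    using \<open>r < 1\<close> by (simp add: power2_eq_square mult_left_le_one_le)
  moreover have "a\<^sup>2 \<le> r\<^sup>2" and "b\<^sup>2 \<le> r\<^sup>2"
    using assms(2,3) \<open>0 \<le> r\<close> abs_le_square_iff[of a r] abs_le_square_iff[of b r] by simp_all
  ultimately have a: "1 - r \<le> 1 - a\<^sup>2" and b: "1 - r \<le> 1 - b\<^sup>2"
    by linarith+
  have "((1 - r) * X)\<^sup>2 = (1 - r)\<^sup>2 * X\<^sup>2"
    by (simp add: power_mult_distrib)
  also have "\<dots> \<le> (1 - a\<^sup>2) * (1 - b\<^sup>2) * X\<^sup>2"
    unfolding power2_eq_square[of "1 - r"] using \<open>r < 1\<close> a
    by (intro mult_right_mono mult_mono[OF a b]) simp_all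
  also have "\<dots> = E\<^sup>2"
    by (subst mult.commute) (rule eq)
  finally show ?thesis
    using \<open>0 \<le> E\<close> by (rule power2_le_imp_le)
qed

section \<open>Geometric series of an isometry\<close>

lemma ctendsto_isometry_series:
  fixes V :: "'a::complex_hilbert \<Rightarrow> 'a"
  assumes "isometry V" and "cmod c < 1"
  shows "\<exists>f. ctendsto (\<lambda>N. \<Sum>n<N. c ^ n *\<^sub>C (V ^^ n) u) f"
proof (rule ctendsto_summable_cnorm)
  have "summable (\<lambda>n. cmod c ^ n * cnorm u)"
    using assms(2) by (simp add: summable_mult2 summable_geometric)
  then show "summable (\<lambda>n. cnorm (c ^ n *\<^sub>C (V ^^ n) u))"
    by (simp add: cnorm_scaleC isometry_cnorm[OF isometry_funpow[OF assms(1)]] norm_power)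
qed

lemma isometry_series_fixpoint:
  assumes V: "bounded_clinear V" and f: "ctendsto (\<lambda>N. \<Sum>n<N. c ^ n *\<^sub>C (V ^^ n) u) f"
  shows "f = u + c *\<^sub>C V f"
proof -
  have "(\<Sum>n<Suc N. c ^ n *\<^sub>C (V ^^ n) u) = u + c *\<^sub>C V (\<Sum>n<N. c ^ n *\<^sub>C (V ^^ n) u)" for N
    unfolding sum.lessThan_Suc_shift
    by (simp add: bounded_clinear_sum[OF V] bounded_clinear_scaleC[OF V] scaleC.scale_sum_right)
  then have "ctendsto (\<lambda>N. \<Sum>n<Suc N. c ^ n *\<^sub>C (V ^^ n) u) (u + c *\<^sub>C V f)"
    using ctendsto_add_left[OF ctendsto_scaleC[OF ctendsto_bounded_clinear[OF V f]]] by simp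
  then show ?thesis
    using ctendsto_Suc[OF f] by (rule ctendsto_unique[rotated])
qed

lemma cinner_wandering_fixpoint:
  assumes "is_adjoint V Vs" and "Vs w = 0" and "f = u + c *\<^sub>C V f"
  shows "cinner w f = cinner w u"
proof -
  have "cinner w f = cinner w (u + c *\<^sub>C V f)"
    using assms(3) by (rule arg_cong)
  also have "\<dots> = cinner w u"
    by (simp add: cinner_add_right cinner_scaleC_right cinner_adjoint_kernel[OF assms(1,2)])
  finally show ?thesis .
qed

lemma wandering_fixpoint:
  assumes "isometry V" and "is_adjoint V Vs" and "Vs u = 0" and fixpoint: "f = u + c *\<^sub>C V f"
  shows "Vs f = c *\<^sub>C f"
    and "(cnorm f)\<^sup>2 * (1 - (cmod c)\<^sup>2) = (cnorm u)\<^sup>2"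
proof -
  have "Vs f = Vs (u + c *\<^sub>C V f)"
    using fixpoint by (rule arg_cong)
  also have "\<dots> = c *\<^sub>C f"
    by (simp add: adjoint_add[OF assms(2)] adjoint_scaleC[OF assms(2)] assms(3)
        isometry_adjoint_cancel[OF assms(1,2)])
  finally show "Vs f = c *\<^sub>C f" .
  have "cinner u (c *\<^sub>C V f) = 0"
    by (simp add: cinner_scaleC_right cinner_adjoint_kernel[OF assms(2,3)])
  then have "(cnorm (u + c *\<^sub>C V f))\<^sup>2 = (cnorm u)\<^sup>2 + (cmod c)\<^sup>2 * (cnorm f)\<^sup>2"
    by (simp add: power2_cnorm_add_orthogonal cnorm_scaleC isometry_cnorm[OF assms(1)] power_mult_distrib)
  moreover have "cnorm f = cnorm (u + c *\<^sub>C V f)"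
    using fixpoint by (rule arg_cong)
  ultimately show "(cnorm f)\<^sup>2 * (1 - (cmod c)\<^sup>2) = (cnorm u)\<^sup>2"
    by (simp add: algebra_simps)
qed

lemma bij_shift_op_isometry:
  fixes V :: "'a::complex_hilbert \<Rightarrow> 'a"
  assumes "isometry V" and "1 < cmod l"
  shows "bij (shift_op V l)"
proof (rule bijI)
  show "inj (shift_op V l)"
  proof (rule injI)
    fix x y
    assume "shift_op V l x = shift_op V l y"
    then have eigen: "V (x - y) = l *\<^sub>C (x - y)"
      by (simp add: shift_op_def bounded_clinear_diff[OF isometry_bounded_clinear[OF assms(1)]]
          scaleC.scale_right_diff_distrib algebra_simps)
    have "cnorm (x - y) = cmod l * cnorm (x - y)"
      using arg_cong[where f = cnorm, OF eigen]
      by (simp add: cnorm_scaleC isometry_cnorm[OF assms(1)])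
    then show "x = y"
      using assms(2) by simp
  qed
  have "y \<in> range (shift_op V l)" for y
  proof -
    have "l \<noteq> 0"
      using assms(2) by auto
    have "cmod (inverse l) < 1"
      using assms(2) by (simp add: norm_inverse inverse_less_1_iff)
    then obtain f
      where "ctendsto (\<lambda>N. \<Sum>n<N. inverse l ^ n *\<^sub>C (V ^^ n) (- (inverse l *\<^sub>C y))) f"
      using ctendsto_isometry_series[OF assms(1)] by blast
    then have f: "f = - (inverse l *\<^sub>C y) + inverse l *\<^sub>C V f"
      by (rule isometry_series_fixpoint[OF isometry_bounded_clinear[OF assms(1)]])
    have "l *\<^sub>C f = l *\<^sub>C (- (inverse l *\<^sub>C y) + inverse l *\<^sub>C V f)"
      using f by (rule arg_cong)
    also have "\<dots> = - y + V f"
      using \<open>l \<noteq> 0\<close> by (simp add: scaleC.scale_right_diff_distrib)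
    finally have "shift_op V l f = y"
      by (simp add: shift_op_def)
    then show ?thesis
      by blast
  qed
  then show "surj (shift_op V l)"
    by blast
qed

lemma ctendsto_circle_series:
  fixes V :: "'a::complex_hilbert \<Rightarrow> 'a"
  assumes "isometry V" and "is_adjoint V Vs" and "Vs e = 0" and "cmod l = 1"
  shows "\<exists>y. ctendsto (\<lambda>N. \<Sum>n<N. (cnj l ^ n / of_nat (Suc n)) *\<^sub>C (V ^^ n) e) y"
proof (rule ctendsto_summable_orthogonal)
  have "cmod (cnj l ^ n / of_nat (Suc n)) = inverse (real (Suc n))" for n
    using assms(4) by (simp add: norm_divide norm_power inverse_eq_divide del: of_nat_Suc)
  then have "(cnorm ((cnj l ^ n / of_nat (Suc n)) *\<^sub>C (V ^^ n) e))\<^sup>2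
      = (cnorm e)\<^sup>2 * inverse (real (Suc n) ^ 2)" for n
    by (simp add: cnorm_scaleC isometry_cnorm[OF isometry_funpow[OF assms(1)]]
        power_mult_distrib power_inverse mult.commute del: of_nat_Suc)
  moreover have "summable (\<lambda>n. inverse (real (Suc n) ^ 2))"
    using inverse_power_summable[of 2, where 'a = real] summable_Suc_iff[of "\<lambda>n. inverse (real n ^ 2)"]
    by simp
  ultimately show "summable (\<lambda>n. (cnorm ((cnj l ^ n / of_nat (Suc n)) *\<^sub>C (V ^^ n) e))\<^sup>2)"
    by (simp add: summable_mult)
  show "cinner ((cnj l ^ m / of_nat (Suc m)) *\<^sub>C (V ^^ m) e) ((cnj l ^ n / of_nat (Suc n)) *\<^sub>C (V ^^ n) e) = 0"
    if "m \<noteq> n" for m n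
    using cinner_funpow_wandering[OF assms(1-3) that]
    by (simp add: cinner_scaleC_left cinner_scaleC_right)
qed

lemma cinner_circle_series_term:
  assumes "is_adjoint V Vs" and "Vs x = (complex_of_real r * cnj l) *\<^sub>C x"
    and "cinner e x = cinner e e" and "cmod l = 1"
  shows "cinner ((cnj l ^ n / of_nat (Suc n)) *\<^sub>C (V ^^ n) e) x
    = complex_of_real ((cnorm e)\<^sup>2 * (r ^ n / real (Suc n)))"
proof -
  have "cnj l * l = 1"
    using assms(4) complex_norm_square[of l] by (simp add: mult.commute)
  have "cnj l ^ n / of_nat (Suc n) * (complex_of_real r * l) ^ n
      = (cnj l * l) ^ n * complex_of_real r ^ n / of_nat (Suc n)"
    by (simp add: power_mult_distrib mult_ac)
  also have "\<dots> = complex_of_real (r ^ n / real (Suc n))"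
    using \<open>cnj l * l = 1\<close> by simp
  finally have coefficient: "cnj l ^ n / of_nat (Suc n) * (complex_of_real r * l) ^ n
      = complex_of_real (r ^ n / real (Suc n))" .
  have "cinner ((cnj l ^ n / of_nat (Suc n)) *\<^sub>C (V ^^ n) e) x
      = cnj l ^ n / of_nat (Suc n) * ((complex_of_real r * l) ^ n * cinner e e)"
    by (simp add: cinner_scaleC_left cinner_funpow_adjoint_eigenvector[OF assms(1,2)] assms(3))
  also have "\<dots> = complex_of_real (r ^ n / real (Suc n)) * complex_of_real ((cnorm e)\<^sup>2)"
    by (simp only: mult.assoc[symmetric] coefficient cinner_self_eq_cnorm)
  finally show ?thesis
    by (simp add: mult.commute)
qed

section \<open>The Koszul complex\<close>

lemma shift_op_commute:
  assumes "bounded_clinear V1" and "bounded_clinear V2" and "V1 \<circ> V2 = V2 \<circ> V1"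
  shows "shift_op V1 l1 \<circ> shift_op V2 l2 = shift_op V2 l2 \<circ> shift_op V1 l1"
proof
  fix x
  have "V1 (V2 x) = V2 (V1 x)"
    using fun_cong[OF assms(3), of x] by simp
  then show "(shift_op V1 l1 \<circ> shift_op V2 l2) x = (shift_op V2 l2 \<circ> shift_op V1 l1) x"
    by (simp add: shift_op_def bounded_clinear_diff[OF assms(1)] bounded_clinear_diff[OF assms(2)]
        bounded_clinear_scaleC[OF assms(1)] bounded_clinear_scaleC[OF assms(2)]
        scaleC.scale_right_diff_distrib mult.commute algebra_simps)
qed

lemma koszul_breaks_at_swap: "koszul_breaks_at n T2 T1 \<longleftrightarrow> koszul_breaks_at n T1 T2"
proof -
  have "{(h1, h2). T2 h2 - T1 h1 = 0} = prod.swap ` {(h1, h2). T1 h2 - T2 h1 = 0}"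
    by force
  moreover have "{(T2 h, T1 h) | h. True} = prod.swap ` {(T1 h, T2 h) | h. True}"
    by force
  moreover have "{T2 h2 - T1 h1 | h1 h2. True} = uminus ` {T1 h2 - T2 h1 | h1 h2. True}"
    by force
  moreover have "uminus ` A = UNIV \<longleftrightarrow> A = UNIV" for A :: "'a set"
  proof
    assume A: "uminus ` A = UNIV"
    have "z \<in> A" for z
    proof -
      obtain a where "a \<in> A" and "- z = - a"
        using A by (metis UNIV_I imageE)
      then show ?thesis
        by simp
    qed
    then show "A = UNIV"
      by blast
  qed simp
  ultimately show ?thesis
    unfolding koszul_breaks_at_def by (auto simp: inj_image_eq_iff)
qed

lemma koszul_exact_swap: "koszul_exact T2 T1 \<longleftrightarrow> koszul_exact T1 T2"
  by (simp add: koszul_exact_def koszul_breaks_at_swap)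

lemma koszul_exact_bij:
  assumes T1: "bounded_clinear T1" and T2: "bounded_clinear T2"
    and commute: "T1 \<circ> T2 = T2 \<circ> T1" and "bij T1"
  shows "koszul_exact T1 T2"
proof -
  have inj: "T1 x = T1 y \<Longrightarrow> x = y" for x y
    using \<open>bij T1\<close> by (simp add: bij_def inj_eq)
  have inv: "T1 (inv T1 y) = y" for y
    using \<open>bij T1\<close> by (simp add: bij_def surj_f_inv_f)
  have "{h. T1 h = 0 \<and> T2 h = 0} = {0}"
    using inj[of _ 0] by (auto simp: bounded_clinear_zero[OF T1] bounded_clinear_zero[OF T2])
  moreover have "{(h1, h2). T1 h2 - T2 h1 = 0} = {(T1 h, T2 h) | h. True}"
  proof (intro set_eqI iffI)
    fix p
    assume "p \<in> {(h1, h2). T1 h2 - T2 h1 = 0}"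
    then obtain h1 h2 where p: "p = (h1, h2)" and "T1 h2 = T2 (T1 (inv T1 h1))"
      by (auto simp: inv)
    then have "h2 = T2 (inv T1 h1)"
      using fun_cong[OF commute] by (auto intro: inj)
    then have "p = (T1 (inv T1 h1), T2 (inv T1 h1))"
      using p inv by simp
    then show "p \<in> {(T1 h, T2 h) | h. True}"
      by blast
  qed (use fun_cong[OF commute] in auto)
  moreover have "{T1 h2 - T2 h1 | h1 h2. True} = UNIV"
  proof -
    have "z = T1 (inv T1 z) - T2 0" for z
      by (simp add: inv bounded_clinear_zero[OF T2])
    then show ?thesis
      by blast
  qed
  ultimately show ?thesis
    unfolding koszul_exact_def koszul_breaks_at_def by auto
qed

lemma cinner_shift_op_eigenvector:
  assumes "is_adjoint V1 V1s" and "is_adjoint V2 V2s"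
    and "V1s x = c1 *\<^sub>C x" and "V2s x = c2 *\<^sub>C x"
  shows "cinner (shift_op V1 l1 h2 - shift_op V2 l2 h1) x
    = (cnj c1 - l1) * cinner h2 x - (cnj c2 - l2) * cinner h1 x"
proof -
  have "cinner (V1 h2) x = cnj c1 * cinner h2 x" and "cinner (V2 h1) x = cnj c2 * cinner h1 x"
    by (simp_all add: is_adjointD[OF assms(1)] is_adjointD[OF assms(2)] assms(3,4)
        cinner_scaleC_right)
  then show ?thesis
    unfolding shift_op_def cinner_diff_left cinner_scaleC_left by (simp add: algebra_simps)
qed

lemma koszul_breaks_at_3I:
  assumes "x \<noteq> 0" and "\<And>h1 h2. cinner (T1 h2 - T2 h1) x = 0"
  shows "koszul_breaks_at 3 T1 T2"
proof -
  have "x \<notin> {T1 h2 - T2 h1 | h1 h2. True}"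
    using assms cinner_eq_zero_iff[of x] by auto
  then have "{T1 h2 - T2 h1 | h1 h2. True} \<noteq> UNIV"
    by blast
  then show ?thesis
    unfolding koszul_breaks_at_def by simp
qed

section \<open>Commuting isometries with positive defect\<close>

locale positive_defect_pair =
  fixes V1 V1s V2 V2s :: "'a::complex_hilbert \<Rightarrow> 'a"
  assumes isometry1: "isometry V1" and isometry2: "isometry V2"
    and commute: "V1 \<circ> V2 = V2 \<circ> V1"
    and adjoint1: "is_adjoint V1 V1s" and adjoint2: "is_adjoint V2 V2s"
    and defect_positive: "positive_op (defect V1 V1s V2 V2s)"
    and defect_nonzero: "defect V1 V1s V2 V2s \<noteq> (\<lambda>x. 0)"
begin

lemma commute_apply: "V1 (V2 x) = V2 (V1 x)"
  using fun_cong[OF commute, of x] by simp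

lemma funpow_commute_apply: "(V1 ^^ n) (V2 x) = V2 ((V1 ^^ n) x)"
  by (induction n) (simp_all add: commute_apply)

lemma adjoints_commute: "V1s (V2s x) = V2s (V1s x)"
proof (rule cinner_right_eqI)
  fix z
  show "cinner z (V1s (V2s x)) = cinner z (V2s (V1s x))"
    by (simp add: is_adjointD[OF adjoint1, symmetric] is_adjointD[OF adjoint2, symmetric]
        commute_apply)
qed

lemma defect_swap: "defect V2 V2s V1 V1s = defect V1 V1s V2 V2s"
  by (auto simp: defect_def commute_apply adjoints_commute algebra_simps)

lemma swap: "positive_defect_pair V2 V2s V1 V1s"
  using isometry1 isometry2 commute adjoint1 adjoint2 defect_positive defect_nonzero
  by unfold_locales (simp_all add: defect_swap)

lemma V1_preserves_ker_V2s:
  assumes "V2s u = 0"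
  shows "V2s (V1 u) = 0"
proof -
  let ?z = "V1 u"
  have "V1 0 = 0" and "V2 0 = 0"
    using isometry1 isometry2 by (simp_all add: isometry_bounded_clinear bounded_clinear_zero)
  then have "defect V1 V1s V2 V2s ?z = - V2 (V2s ?z)"
    by (simp add: defect_def isometry_adjoint_cancel[OF isometry1 adjoint1] assms)
  then have "cinner (defect V1 V1s V2 V2s ?z) ?z = - cinner (V2s ?z) (V2s ?z)"
    by (simp add: cinner_minus_left is_adjointD[OF adjoint2])
  moreover have "0 \<le> Re (cinner (defect V1 V1s V2 V2s ?z) ?z)"
    using defect_positive by (simp add: positive_op_def)
  ultimately have "(cnorm (V2s ?z))\<^sup>2 \<le> 0"
    by (simp add: power2_cnorm)
  then show ?thesis
    by simp
qed

lemma V2_preserves_ker_V1s: "V1s u = 0 \<Longrightarrow> V1s (V2 u) = 0"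
  by (rule positive_defect_pair.V1_preserves_ker_V2s[OF swap])

lemma V1s_defect: "V1s (defect V1 V1s V2 V2s y) = 0"
proof -
  define p where "p = V2s y - V1 (V1s (V2s y))"
  have "V1s p = 0"
    by (simp add: p_def adjoint_diff[OF adjoint1] isometry_adjoint_cancel[OF isometry1 adjoint1])
  moreover have "defect V1 V1s V2 V2s y = (y - V1 (V1s y)) - V2 p"
    using isometry2 by (simp add: defect_def p_def isometry_bounded_clinear bounded_clinear_diff
        commute_apply adjoints_commute algebra_simps)
  ultimately show ?thesis
    by (simp add: adjoint_diff[OF adjoint1] isometry_adjoint_cancel[OF isometry1 adjoint1]
        V2_preserves_ker_V1s)
qed

lemma V2s_defect: "V2s (defect V1 V1s V2 V2s y) = 0"
  using positive_defect_pair.V1s_defect[OF swap] by (simp add: defect_swap)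

lemma wandering_vector:
  obtains e where "e \<noteq> 0" and "V1s e = 0" and "V2s e = 0"
proof -
  obtain y where "defect V1 V1s V2 V2s y \<noteq> 0"
    using defect_nonzero by auto
  then show ?thesis
    using that V1s_defect V2s_defect by blast
qed

lemma joint_eigenvector:
  assumes e1: "V1s e = 0" and e2: "V2s e = 0" and c1: "cmod c1 < 1" and c2: "cmod c2 < 1"
  obtains x where "V1s x = c1 *\<^sub>C x" and "V2s x = c2 *\<^sub>C x" and "cinner e x = cinner e e"
    and "(cnorm x)\<^sup>2 * ((1 - (cmod c1)\<^sup>2) * (1 - (cmod c2)\<^sup>2)) = (cnorm e)\<^sup>2"
proof -
  have ker2: "V2s ((V1 ^^ m) e) = 0" for m
    by (induction m) (simp_all add: e2 V1_preserves_ker_V2s)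
  have ker1: "V1s ((V2 ^^ n) e) = 0" for n
    by (induction n) (simp_all add: e1 V2_preserves_ker_V1s)
  obtain f where f_lim: "ctendsto (\<lambda>N. \<Sum>n<N. c2 ^ n *\<^sub>C (V2 ^^ n) e) f"
    using ctendsto_isometry_series[OF isometry2 c2] by blast
  have f: "f = e + c2 *\<^sub>C V2 f"
    by (rule isometry_series_fixpoint[OF isometry_bounded_clinear[OF isometry2] f_lim])
  have f1: "V1s f = 0"
    using bounded_clinear_isometry_adjoint[OF isometry1 adjoint1]
    by (rule bounded_clinear_series_eq_0[OF _ f_lim]) (simp add: ker1 adjoint_scaleC[OF adjoint1])
  obtain x where x_lim: "ctendsto (\<lambda>N. \<Sum>n<N. c1 ^ n *\<^sub>C (V1 ^^ n) f) x"
    using ctendsto_isometry_series[OF isometry1 c1] by blast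
  have x: "x = f + c1 *\<^sub>C V1 x"
    by (rule isometry_series_fixpoint[OF isometry_bounded_clinear[OF isometry1] x_lim])
  have V1_orbit: "V2s ((V1 ^^ m) f) = c2 *\<^sub>C (V1 ^^ m) f" for m
  proof -
    have Vm: "bounded_clinear (V1 ^^ m)"
      using isometry1 by (simp add: isometry_bounded_clinear bounded_clinear_funpow)
    have "(V1 ^^ m) f = (V1 ^^ m) (e + c2 *\<^sub>C V2 f)"
      using f by (rule arg_cong)
    also have "\<dots> = (V1 ^^ m) e + c2 *\<^sub>C V2 ((V1 ^^ m) f)"
      by (simp add: bounded_clinear_add[OF Vm] bounded_clinear_scaleC[OF Vm] funpow_commute_apply)
    finally show ?thesis
      by (rule wandering_fixpoint(1)[OF isometry2 adjoint2 ker2])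
  qed
  have "shift_op V2s c2 x = 0"
    using bounded_clinear_shift_op[OF bounded_clinear_isometry_adjoint[OF isometry2 adjoint2]]
    by (rule bounded_clinear_series_eq_0[OF _ x_lim])
      (simp add: shift_op_def adjoint_scaleC[OF adjoint2] V1_orbit mult.commute)
  then have x2: "V2s x = c2 *\<^sub>C x"
    by (simp add: shift_op_def)
  show ?thesis
  proof (rule that[OF wandering_fixpoint(1)[OF isometry1 adjoint1 f1 x] x2])
    show "cinner e x = cinner e e"
      using cinner_wandering_fixpoint[OF adjoint1 e1 x] cinner_wandering_fixpoint[OF adjoint2 e2 f]
      by simp
    show "(cnorm x)\<^sup>2 * ((1 - (cmod c1)\<^sup>2) * (1 - (cmod c2)\<^sup>2)) = (cnorm e)\<^sup>2"
      using wandering_fixpoint(2)[OF isometry1 adjoint1 f1 x] wandering_fixpoint(2)[OF isometry2 adjoint2 e2 f]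
      by (simp flip: mult.assoc)
  qed
qed

lemma joint_eigenvalue_adjoints:
  assumes "cmod w1 < 1" and "cmod w2 < 1"
  shows "joint_eigenvalue V1s V2s (w1, w2)"
proof -
  obtain e where e: "e \<noteq> 0" "V1s e = 0" "V2s e = 0"
    by (rule wandering_vector)
  obtain x where "V1s x = w1 *\<^sub>C x" and "V2s x = w2 *\<^sub>C x" and "cinner e x = cinner e e"
    using joint_eigenvector[OF e(2,3) assms] by blast
  moreover have "x \<noteq> 0"
    using e(1) \<open>cinner e x = cinner e e\<close> cinner_eq_zero_iff[of e] by auto
  ultimately show ?thesis
    unfolding joint_eigenvalue_def by auto
qed

lemma koszul_breaks_at_3_open_bidisc:
  assumes "cmod l1 < 1" and "cmod l2 < 1"
  shows "koszul_breaks_at 3 (shift_op V1 l1) (shift_op V2 l2)"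
proof -
  obtain e where e: "e \<noteq> 0" "V1s e = 0" "V2s e = 0"
    by (rule wandering_vector)
  have "cmod (cnj l1) < 1" and "cmod (cnj l2) < 1"
    using assms by simp_all
  then obtain x where x: "V1s x = cnj l1 *\<^sub>C x" "V2s x = cnj l2 *\<^sub>C x" "cinner e x = cinner e e"
    using joint_eigenvector[OF e(2,3)] by blast
  show ?thesis
  proof (rule koszul_breaks_at_3I)
    show "x \<noteq> 0"
      using e(1) x(3) cinner_eq_zero_iff[of e] by auto
    show "cinner (shift_op V1 l1 h2 - shift_op V2 l2 h1) x = 0" for h1 h2
      by (simp add: cinner_shift_op_eigenvector[OF adjoint1 adjoint2 x(1,2)])
  qed
qed

lemma eigenvector_pairing_bound:
  assumes e: "V1s e = 0" "V2s e = 0" and l: "cmod l1 \<le> 1" "cmod l2 \<le> 1"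
    and r: "0 < r" "r < 1"
  obtains x where "V1s x = (complex_of_real r * cnj l1) *\<^sub>C x" and "cinner e x = cinner e e"
    and "\<And>h1 h2. cmod (cinner (shift_op V1 l1 h2 - shift_op V2 l2 h1) x)
      \<le> (cnorm h1 + cnorm h2) * cnorm e"
proof -
  define c1 where "c1 = complex_of_real r * cnj l1"
  define c2 where "c2 = complex_of_real r * cnj l2"
  have "cmod c1 \<le> r" and "cmod c2 \<le> r"
    using l r by (simp_all add: c1_def c2_def norm_mult mult_left_le)
  then have "cmod c1 < 1" and "cmod c2 < 1"
    using r by simp_all
  then obtain x where x1: "V1s x = c1 *\<^sub>C x" and x2: "V2s x = c2 *\<^sub>C x"
    and xe: "cinner e x = cinner e e"
    and x_norm: "(cnorm x)\<^sup>2 * ((1 - (cmod c1)\<^sup>2) * (1 - (cmod c2)\<^sup>2)) = (cnorm e)\<^sup>2"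
    using joint_eigenvector[OF e] by blast
  have x_bound: "(1 - r) * cnorm x \<le> cnorm e"
    using x_norm by (rule one_minus_mult_le_of_power2_eq)
      (use \<open>cmod c1 \<le> r\<close> \<open>cmod c2 \<le> r\<close> r in simp_all)
  have "cmod (cnj c1 - l1) \<le> 1 - r" and "cmod (cnj c2 - l2) \<le> 1 - r"
  proof -
    have "cnj c1 - l1 = complex_of_real (r - 1) * l1" and "cnj c2 - l2 = complex_of_real (r - 1) * l2"
      by (simp_all add: c1_def c2_def algebra_simps)
    moreover have "cmod (complex_of_real (r - 1)) = 1 - r"
      using r by (simp only: norm_of_real)
    ultimately show "cmod (cnj c1 - l1) \<le> 1 - r" and "cmod (cnj c2 - l2) \<le> 1 - r"
      using l r by (simp_all add: norm_mult mult_left_le)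
  qed
  show ?thesis
  proof (rule that[OF x1[unfolded c1_def] xe])
    fix h1 h2
    have "cmod (cinner (shift_op V1 l1 h2 - shift_op V2 l2 h1) x)
        \<le> cmod (cnj c1 - l1) * cmod (cinner h2 x) + cmod (cnj c2 - l2) * cmod (cinner h1 x)"
      unfolding cinner_shift_op_eigenvector[OF adjoint1 adjoint2 x1 x2]
      by (rule order_trans[OF norm_triangle_ineq4]) (simp add: norm_mult)
    also have "\<dots> \<le> (1 - r) * (cnorm h2 * cnorm x) + (1 - r) * (cnorm h1 * cnorm x)"
      using \<open>cmod (cnj c1 - l1) \<le> 1 - r\<close> \<open>cmod (cnj c2 - l2) \<le> 1 - r\<close> r
      by (intro add_mono mult_mono cnorm_cauchy_schwarz) simp_all
    also have "\<dots> = (cnorm h1 + cnorm h2) * ((1 - r) * cnorm x)"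
      by (simp add: algebra_simps)
    also have "\<dots> \<le> (cnorm h1 + cnorm h2) * cnorm e"
      using x_bound by (simp add: mult_left_mono)
    finally show "cmod (cinner (shift_op V1 l1 h2 - shift_op V2 l2 h1) x)
      \<le> (cnorm h1 + cnorm h2) * cnorm e" .
  qed
qed

lemma koszul_breaks_at_3_circle:
  assumes l1: "cmod l1 = 1" and l2: "cmod l2 \<le> 1"
  shows "koszul_breaks_at 3 (shift_op V1 l1) (shift_op V2 l2)"
proof -
  obtain e where e: "e \<noteq> 0" "V1s e = 0" "V2s e = 0"
    by (rule wandering_vector)
  obtain y where y: "ctendsto (\<lambda>N. \<Sum>n<N. (cnj l1 ^ n / of_nat (Suc n)) *\<^sub>C (V1 ^^ n) e) y"
    using ctendsto_circle_series[OF isometry1 adjoint1 e(2) l1] by blast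
  have "y \<notin> {shift_op V1 l1 h2 - shift_op V2 l2 h1 | h1 h2. True}"
  proof
    assume "y \<in> {shift_op V1 l1 h2 - shift_op V2 l2 h1 | h1 h2. True}"
    then obtain h1 h2 where y_eq: "y = shift_op V1 l1 h2 - shift_op V2 l2 h1"
      by blast
    define K where "K = (cnorm h1 + cnorm h2) * cnorm e"
    obtain r M where r: "0 < r" "r < 1" and M: "K / (cnorm e)\<^sup>2 < (\<Sum>n<M. r ^ n / real (Suc n))"
      by (rule power_harmonic_sum_unbounded)
    have "cmod l1 \<le> 1"
      using l1 by simp
    then obtain x where x1: "V1s x = (complex_of_real r * cnj l1) *\<^sub>C x" and xe: "cinner e x = cinner e e"
      and x_bound: "\<And>h1 h2. cmod (cinner (shift_op V1 l1 h2 - shift_op V2 l2 h1) x)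
        \<le> (cnorm h1 + cnorm h2) * cnorm e"
      using eigenvector_pairing_bound[OF e(2,3) _ l2 r] by blast
    have "cinner (\<Sum>n<N. (cnj l1 ^ n / of_nat (Suc n)) *\<^sub>C (V1 ^^ n) e) x
        = complex_of_real (\<Sum>n<N. (cnorm e)\<^sup>2 * (r ^ n / real (Suc n)))" for N
      by (simp only: cinner_sum_left cinner_circle_series_term[OF adjoint1 x1 xe l1] of_real_sum)
    then have lim: "(\<lambda>N. \<Sum>n<N. (cnorm e)\<^sup>2 * (r ^ n / real (Suc n))) \<longlonglongrightarrow> Re (cinner y x)"
      using tendsto_Re[OF tendsto_cinner_left[OF y, of x]] by (simp only: Re_complex_of_real)
    have "incseq (\<lambda>N. \<Sum>n<N. (cnorm e)\<^sup>2 * (r ^ n / real (Suc n)))"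
      by (rule incseq_sumI) (use r in simp)
    from incseq_le[OF this lim]
    have "(\<Sum>n<M. (cnorm e)\<^sup>2 * (r ^ n / real (Suc n))) \<le> Re (cinner y x)" .
    also have "\<dots> \<le> cmod (cinner y x)"
      by (rule complex_Re_le_cmod)
    also have "\<dots> \<le> K"
      using x_bound[of h2 h1] by (simp add: y_eq K_def)
    finally have "(\<Sum>n<M. r ^ n / real (Suc n)) * (cnorm e)\<^sup>2 \<le> K"
      by (simp add: sum_distrib_left mult.commute)
    moreover have "K < (\<Sum>n<M. r ^ n / real (Suc n)) * (cnorm e)\<^sup>2"
      using M e(1) by (simp add: pos_divide_less_eq)
    ultimately show False
      by simp
  qed
  then have "{shift_op V1 l1 h2 - shift_op V2 l2 h1 | h1 h2. True} \<noteq> UNIV"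
    by blast
  then show ?thesis
    by (simp add: koszul_breaks_at_def)
qed

lemma koszul_breaks_at_3_closed_bidisc:
  assumes "cmod l1 \<le> 1" and "cmod l2 \<le> 1"
  shows "koszul_breaks_at 3 (shift_op V1 l1) (shift_op V2 l2)"
proof -
  consider "cmod l1 = 1" | "cmod l2 = 1" | "cmod l1 < 1" "cmod l2 < 1"
    using assms by linarith
  then show ?thesis
  proof cases
    case 1
    then show ?thesis
      using assms(2) by (rule koszul_breaks_at_3_circle)
  next
    case 2
    then show ?thesis
      using positive_defect_pair.koszul_breaks_at_3_circle[OF swap 2 assms(1)]
      by (simp add: koszul_breaks_at_swap)
  next
    case 3
    then show ?thesis
      by (rule koszul_breaks_at_3_open_bidisc)
  qed
qed

lemma koszul_exact_outside_closed_bidisc: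
  assumes "1 < cmod l1 \<or> 1 < cmod l2"
  shows "koszul_exact (shift_op V1 l1) (shift_op V2 l2)"
proof -
  have bounded: "bounded_clinear (shift_op V1 l1)" "bounded_clinear (shift_op V2 l2)"
    using isometry1 isometry2 by (simp_all add: isometry_bounded_clinear bounded_clinear_shift_op)
  have shifts_commute: "shift_op V1 l1 \<circ> shift_op V2 l2 = shift_op V2 l2 \<circ> shift_op V1 l1"
    using isometry1 isometry2 commute by (simp add: isometry_bounded_clinear shift_op_commute)
  from assms show ?thesis
  proof
    assume "1 < cmod l1"
    with bounded shifts_commute show ?thesis
      by (intro koszul_exact_bij bij_shift_op_isometry[OF isometry1])
  next
    assume "1 < cmod l2"
    with bounded shifts_commute show ?thesis
      by (subst koszul_exact_swap[symmetric])
        (intro koszul_exact_bij bij_shift_op_isometry[OF isometry2], simp_all)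
  qed
qed

lemma taylor_spectrum_eq_closed_bidisc: "taylor_spectrum V1 V2 = cball 0 1 \<times> cball 0 1"
proof -
  have "koszul_exact (shift_op V1 l1) (shift_op V2 l2) \<longleftrightarrow> 1 < cmod l1 \<or> 1 < cmod l2" for l1 l2
    using koszul_exact_outside_closed_bidisc koszul_breaks_at_3_closed_bidisc
    by (force simp: koszul_exact_def)
  then show ?thesis
    by (auto simp: taylor_spectrum_def not_less)
qed

end

theorem theorem4p11:
  fixes V1 V2 V1s V2s :: "'a::complex_hilbert \<Rightarrow> 'a"
  assumes "isometry V1" and "isometry V2"
    and "V1 \<circ> V2 = V2 \<circ> V1"
    and "is_adjoint V1 V1s" and "is_adjoint V2 V2s"
    and "positive_op (defect V1 V1s V2 V2s)"
    and "defect V1 V1s V2 V2s \<noteq> (\<lambda>x. 0)"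
  shows "taylor_spectrum V1 V2 = cball 0 1 \<times> cball 0 1 \<and>
         (\<forall>w1 w2. cmod w1 < 1 \<and> cmod w2 < 1 \<longrightarrow> joint_eigenvalue V1s V2s (w1, w2)) \<and>
         (\<forall>w1 w2. cmod w1 < 1 \<and> cmod w2 < 1 \<longrightarrow>
           koszul_breaks_at 3 (shift_op V1 w1) (shift_op V2 w2))"
proof -
  interpret positive_defect_pair V1 V1s V2 V2s
    using assms by unfold_locales
  show ?thesis
    using taylor_spectrum_eq_closed_bidisc joint_eigenvalue_adjoints koszul_breaks_at_3_open_bidisc
    by blast
qed

end
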